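(* Let $d\ge2$, $r\ge1$, $l_1,\dots,l_r\in\{1,\dots,d\}$ with $\sum_{j=1}^r l_j\le d$, and $l=d-\sum_{j=1}^r(l_j-1)$. Let $A\in\mathbf H(d;l_1,\dots,l_r)$ have a spectral decomposition $A=PDP^*$ with $P\in\mathbf U(d)$ and $D$ a real diagonal $d\times d$ matrix, and suppose $A$ has exactly $l$ distinct eigenvalues. Then for every $\varepsilon>0$ there is $\delta>0$ such that for every $B\in\mathbf H(d;l_1,\dots,l_r)$ with $\max_{1\le i,j\le d}|A_{i,j}-B_{i,j}|<\delta$, the matrix $B$ has exactly $l$ distinct eigenvalues and admits a spectral decomposition $B=QFQ^*$ with $Q\in\mathbf U(d)$, $F$ real diagonal, such that $\max_{1\le i\le d}|D_{i,i}-F_{i,i}|<\varepsilon$ and $\max_{1\le i,j\le d}|Q_{i,j}-P_{i,j}|<\varepsilon$.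
   Context: $\mathbf U(d)$ is the group of $d\times d$ unitary matrices. For a complex Hermitian $d\times d$ matrix $x$ let $E_1(x)\le\cdots\le E_d(x)$ be its eigenvalues. $\mathbf H(d;l_1,\dots,l_r)$ is the set of complex Hermitian $d\times d$ matrices $x$ for which there exist pairwise disjoint $J_1,\dots,J_r\subseteq\{1,\dots,d\}$ with $|J_j|=l_j$ such that, for each $j$, the values $E_i(x)$, $i\in J_j$, are all equal. *)

theory Defs
  imports "HOL-Analysis.Analysis" "Jordan_Normal_Form.Schur_Decomposition"
begin

text \<open>Matrices are Jordan_Normal_Form matrices (entries indexed 0..d-1).\<close>

definition unitary_mat :: "nat \<Rightarrow> complex mat \<Rightarrow> bool" where
  "unitary_mat d P \<longleftrightarrow> P \<in> carrier_mat d d \<and> P * mat_adjoint P = 1\<^sub>m d \<and> mat_adjoint P * P = 1\<^sub>m d"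

definition hermitian_mat :: "nat \<Rightarrow> complex mat \<Rightarrow> bool" where
  "hermitian_mat d A \<longleftrightarrow> A \<in> carrier_mat d d \<and> mat_adjoint A = A"

definition real_diagonal_mat :: "nat \<Rightarrow> complex mat \<Rightarrow> bool" where
  "real_diagonal_mat d D \<longleftrightarrow> D \<in> carrier_mat d d \<and> diagonal_mat D \<and> (\<forall>i<d. D $$ (i,i) \<in> \<real>)"

definition eig_list :: "nat \<Rightarrow> complex mat \<Rightarrow> real list" where
  "eig_list d x = (THE es. length es = d \<and> sorted es \<and>
      char_poly x = prod_list (map (\<lambda>e. [:- complex_of_real e, 1:]) es))"

text \<open>E_i(x) for 1 \<le> i \<le> d, so that E_1(x) \<le> ... \<le> E_d(x).\<close>
definition E :: "nat \<Rightarrow> complex mat \<Rightarrow> nat \<Rightarrow> real" where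
  "E d x i = eig_list d x ! (i - 1)"

text \<open>The set H(d; l_1,...,l_r); the l_j are given by the function ls on {1..r}.\<close>
definition Hset :: "nat \<Rightarrow> nat \<Rightarrow> (nat \<Rightarrow> nat) \<Rightarrow> complex mat set" where
  "Hset d r ls = {x. hermitian_mat d x \<and>
     (\<exists>J :: nat \<Rightarrow> nat set.
        (\<forall>j\<in>{1..r}. J j \<subseteq> {1..d} \<and> card (J j) = ls j) \<and>
        (\<forall>j\<in>{1..r}. \<forall>j'\<in>{1..r}. j \<noteq> j' \<longrightarrow> J j \<inter> J j' = {}) \<and>
        (\<forall>j\<in>{1..r}. \<forall>i\<in>J j. \<forall>i'\<in>J j. E d x i = E d x i'))}"

end

(* A compactness argument. If the claim failed for some epsilon, there would be matrices B_k in
   H(d; l_1, ..., l_r) converging to A, none of which has a spectral decomposition close to (P, D).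
   Diagonalise B_k = Q_k F_k Q_k^*. Since U(d) is compact, along a subsequence Q_k -> Q_0 and then
   F_k -> F_0 with A = Q_0 F_0 Q_0^*. Eventually F_k separates every pair of diagonal entries that
   F_0 separates, so B_k has at least as many distinct eigenvalues as A, namely l, while membership
   in H(d; l_1, ..., l_r) allows at most l. Hence F_k is constant wherever F_0 is, i.e. on the
   eigenspaces of F_0. The unitary U = Q_0^* P maps the eigenspaces of D onto those of F_0, so
   B_k = (Q_k U) G (Q_k U)^* for a real diagonal G close to D, and Q_k U -> Q_0 U = P. *)

theory Submission
  imports Defs "Jordan_Normal_Form.Spectral_Radius"
begin

section \<open>Adjoints and unitary matrices\<close>

lemma mat_adjoint_dim [simp]:
  "dim_row (mat_adjoint A) = dim_col A" "dim_col (mat_adjoint A) = dim_row A"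
  unfolding mat_adjoint_def mat_of_rows_def by auto

lemma index_mat_adjoint [simp]:
  "i < dim_col A \<Longrightarrow> j < dim_row A \<Longrightarrow> mat_adjoint A $$ (i,j) = cnj (A $$ (j,i))"
  unfolding mat_adjoint_def mat_of_rows_def by auto

lemma mat_adjoint_carrier [simp]: "A \<in> carrier_mat n m \<Longrightarrow> mat_adjoint A \<in> carrier_mat m n"
  unfolding carrier_mat_def by auto

lemma mat_adjoint_adjoint [simp]: "mat_adjoint (mat_adjoint (A :: complex mat)) = A"
  by (rule eq_matI) auto

lemma mat_adjoint_one [simp]: "mat_adjoint (1\<^sub>m n :: complex mat) = 1\<^sub>m n"
  by (rule eq_matI) auto

lemma index_mult_mat_sum:
  "A \<in> carrier_mat n k \<Longrightarrow> B \<in> carrier_mat k m \<Longrightarrow> i < n \<Longrightarrow> j < m \<Longrightarrow>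
   (A * B) $$ (i,j) = (\<Sum>t<k. A $$ (i,t) * B $$ (t,j))"
  by (auto simp: scalar_prod_def intro!: sum.cong)

lemma mat_adjoint_mult:
  assumes "(A :: complex mat) \<in> carrier_mat n k" "B \<in> carrier_mat k m"
  shows "mat_adjoint (A * B) = mat_adjoint B * mat_adjoint A"
proof (rule eq_matI)
  fix i j assume "i < dim_row (mat_adjoint B * mat_adjoint A)" "j < dim_col (mat_adjoint B * mat_adjoint A)"
  then have i: "i < m" and j: "j < n" using assms by auto
  have "mat_adjoint (A * B) $$ (i,j) = (\<Sum>t<k. cnj (A $$ (j,t)) * cnj (B $$ (t,i)))"
    using assms i j by (simp add: index_mult_mat_sum[OF assms j i] cnj_sum)
  also have "\<dots> = (mat_adjoint B * mat_adjoint A) $$ (i,j)"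
    using assms i j by (subst index_mult_mat_sum[of _ m k _ n]) (auto simp: mult.commute)
  finally show "mat_adjoint (A * B) $$ (i,j) = (mat_adjoint B * mat_adjoint A) $$ (i,j)" .
qed (use assms in auto)

lemma index_diagonal_mult_mat:
  assumes "M \<in> carrier_mat n n" "diagonal_mat M" "(X :: 'a :: semiring_0 mat) \<in> carrier_mat n m"
    and "i < n" "j < m"
  shows "(M * X) $$ (i,j) = M $$ (i,i) * X $$ (i,j)"
proof -
  have "(M * X) $$ (i,j) = (\<Sum>t<n. M $$ (i,t) * X $$ (t,j))"
    using assms by (intro index_mult_mat_sum) auto
  also have "\<dots> = (\<Sum>t<n. if t = i then M $$ (i,i) * X $$ (i,j) else 0)"
    using assms by (intro sum.cong) (auto simp: diagonal_mat_def)
  finally show ?thesis using assms by simp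
qed

lemma index_mult_diagonal_mat:
  assumes "M \<in> carrier_mat m m" "diagonal_mat M" "(X :: 'a :: semiring_0 mat) \<in> carrier_mat n m"
    and "i < n" "j < m"
  shows "(X * M) $$ (i,j) = X $$ (i,j) * M $$ (j,j)"
proof -
  have "(X * M) $$ (i,j) = (\<Sum>t<m. X $$ (i,t) * M $$ (t,j))"
    using assms by (intro index_mult_mat_sum) auto
  also have "\<dots> = (\<Sum>t<m. if t = j then X $$ (i,j) * M $$ (j,j) else 0)"
    using assms by (intro sum.cong) (auto simp: diagonal_mat_def)
  finally show ?thesis using assms by simp
qed

lemma unitary_mat_carrier:
  "unitary_mat n U \<Longrightarrow> U \<in> carrier_mat n n"
  "unitary_mat n U \<Longrightarrow> mat_adjoint U \<in> carrier_mat n n"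
  unfolding unitary_mat_def by auto

lemma unitary_mat_inverse:
  "unitary_mat n U \<Longrightarrow> U * mat_adjoint U = 1\<^sub>m n"
  "unitary_mat n U \<Longrightarrow> mat_adjoint U * U = 1\<^sub>m n"
  unfolding unitary_mat_def by auto

lemma unitary_mat_cancel:
  assumes "unitary_mat n U" "(X :: complex mat) \<in> carrier_mat n k"
  shows "U * (mat_adjoint U * X) = X" "mat_adjoint U * (U * X) = X"
  using assoc_mult_mat[of U n n "mat_adjoint U" n X] assoc_mult_mat[of "mat_adjoint U" n n U n X]
    assms unitary_mat_inverse[OF assms(1)] unitary_mat_carrier[OF assms(1)] by auto

lemma unitary_mat_adjoint: "unitary_mat n U \<Longrightarrow> unitary_mat n (mat_adjoint U)"
  unfolding unitary_mat_def by auto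

lemma unitary_mat_mult:
  assumes "unitary_mat n U" "unitary_mat n V"
  shows "unitary_mat n (U * V)"
proof -
  have c: "U \<in> carrier_mat n n" "V \<in> carrier_mat n n"
    "mat_adjoint U \<in> carrier_mat n n" "mat_adjoint V \<in> carrier_mat n n"
    using assms by (auto simp: unitary_mat_carrier)
  have "U * V * mat_adjoint (U * V) = U * (V * (mat_adjoint V * mat_adjoint U))"
    using c by (simp add: mat_adjoint_mult[of _ n n _ n] assoc_mult_mat[OF c(1,2) mult_carrier_mat[OF c(4,3)]])
  also have "\<dots> = 1\<^sub>m n"
    using c unitary_mat_cancel[OF assms(2) c(3)] unitary_mat_inverse(1)[OF assms(1)] by simp
  finally have 1: "U * V * mat_adjoint (U * V) = 1\<^sub>m n" .
  have "mat_adjoint (U * V) * (U * V) = mat_adjoint V * (mat_adjoint U * (U * V))"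
    using c by (simp add: mat_adjoint_mult[of _ n n _ n] assoc_mult_mat[of _ n n _ n _ n])
  also have "\<dots> = 1\<^sub>m n"
    using c unitary_mat_cancel[OF assms(1) c(2)] unitary_mat_inverse(2)[OF assms(2)] by simp
  finally show ?thesis using 1 c unfolding unitary_mat_def by auto
qed

lemma unitary_mat_col_norm:
  assumes "unitary_mat n U" "j < n"
  shows "(\<Sum>t<n. (cmod (U $$ (t,j)))\<^sup>2) = 1"
proof -
  have "complex_of_real (\<Sum>t<n. (cmod (U $$ (t,j)))\<^sup>2) = (\<Sum>t<n. cnj (U $$ (t,j)) * U $$ (t,j))"
    by (simp only: of_real_sum complex_norm_square) (simp add: mult.commute)
  also have "\<dots> = (mat_adjoint U * U) $$ (j,j)"
    using assms carrier_matD[OF unitary_mat_carrier(1)[OF assms(1)]]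
    by (subst index_mult_mat_sum[of _ n n _ n]) (auto intro!: sum.cong)
  also have "\<dots> = 1" using assms unitary_mat_inverse(2)[OF assms(1)] by simp
  finally show ?thesis by (metis of_real_eq_1_iff)
qed

lemma norm_unitary_mat_entry_le:
  assumes "unitary_mat n U" "i < n" "j < n"
  shows "cmod (U $$ (i,j)) \<le> 1"
proof -
  have "(cmod (U $$ (i,j)))\<^sup>2 \<le> (\<Sum>t<n. (cmod (U $$ (t,j)))\<^sup>2)"
    using assms by (intro member_le_sum) auto
  then show ?thesis using unitary_mat_col_norm[OF assms(1,3)] by (simp add: power_le_one_iff)
qed

lemma unitary_mat_col_nonzero:
  assumes "unitary_mat n U" "j < n"
  obtains i where "i < n" "U $$ (i,j) \<noteq> 0"
  using unitary_mat_col_norm[OF assms] by (metis (no_types, lifting) norm_zero sum.neutral zero_neq_one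
      zero_power2 lessThan_iff)

section \<open>The spectral theorem for Hermitian matrices\<close>

lemma cscalar_prod_sum:
  "v \<in> carrier_vec n \<Longrightarrow> w \<in> carrier_vec n \<Longrightarrow> v \<bullet>c w = (\<Sum>i<n. v $ i * cnj (w $ i))"
  unfolding scalar_prod_def by (auto simp: atLeast0LessThan)

lemma cscalar_prod_self:
  "w \<in> carrier_vec n \<Longrightarrow> w \<bullet>c w = complex_of_real (\<Sum>i<n. (cmod (w $ i))\<^sup>2)"
  by (simp only: cscalar_prod_sum of_real_sum complex_norm_square)

lemma unitary_mat_normalize_corthogonal:
  fixes ws :: "complex vec list"
  assumes ws: "corthogonal ws" "set ws \<subseteq> carrier_vec n" "length ws = n"
  defines "N j \<equiv> complex_of_real (sqrt (\<Sum>i<n. (cmod (ws ! j $ i))\<^sup>2))"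
  shows "unitary_mat n (mat n n (\<lambda>(i,j). ws ! j $ i / N j))"
proof -
  define W where "W = mat n n (\<lambda>(i,j). ws ! j $ i / N j)"
  have wsc: "ws ! j \<in> carrier_vec n" if "j < n" for j using ws that by auto
  have selfN: "ws ! j \<bullet>c ws ! j = N j * N j" if "j < n" for j
    using cscalar_prod_self[OF wsc[OF that]]
    by (simp add: N_def sum_nonneg flip: of_real_mult)
  have N0: "N j \<noteq> 0" if "j < n" for j
    using corthogonalD[OF ws(1), of j j] selfN[OF that] that ws(3) by auto
  have W: "W \<in> carrier_mat n n" "mat_adjoint W \<in> carrier_mat n n" unfolding W_def by auto
  have WW: "mat_adjoint W * W = 1\<^sub>m n"
  proof (rule eq_matI)
    fix j k assume "j < dim_row (1\<^sub>m n :: complex mat)" "k < dim_col (1\<^sub>m n :: complex mat)"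
    then have j: "j < n" and k: "k < n" by auto
    have "(mat_adjoint W * W) $$ (j,k) = (\<Sum>t<n. ws ! k $ t * cnj (ws ! j $ t)) / (cnj (N j) * N k)"
      using W j k unfolding sum_divide_distrib
      by (subst index_mult_mat_sum[of _ n n _ n]) (auto simp: W_def intro!: sum.cong)
    also have "\<dots> = (ws ! k \<bullet>c ws ! j) / (N j * N k)"
      using cscalar_prod_sum[OF wsc[OF k] wsc[OF j]] by (simp add: N_def)
    also have "\<dots> = 1\<^sub>m n $$ (j,k)"
      using corthogonalD[OF ws(1), of k j] selfN[OF j] N0[OF j] j k ws(3) by auto
    finally show "(mat_adjoint W * W) $$ (j,k) = 1\<^sub>m n $$ (j,k)" .
  qed (use W in auto)
  then have "W * mat_adjoint W = 1\<^sub>m n" by (rule mat_mult_left_right_inverse[OF W(2,1)])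
  with WW W show ?thesis unfolding unitary_mat_def W_def by blast
qed

lemma unitary_mat_first_col:
  fixes v :: "complex vec"
  assumes v: "v \<in> carrier_vec n" "v \<noteq> 0\<^sub>v n"
  obtains W c where "unitary_mat n W" "col W 0 = c \<cdot>\<^sub>v v"
proof -
  interpret cof_vec_space n "TYPE(complex)" .
  define b where "b = basis_completion v"
  from basis_completion[OF v, folded b_def] have b: "set b \<subseteq> carrier_vec n" "distinct b"
    "\<not> lin_dep (set b)" "length b = n" "hd b = v" by auto
  have "n \<noteq> 0" using v by auto
  then obtain vs where bv: "b = v # vs" using b(4,5) by (cases b) auto
  define ws where "ws = gram_schmidt n b"
  from gram_schmidt_result[OF b(1-3) ws_def] b(4)
  have ws: "corthogonal ws" "set ws \<subseteq> carrier_vec n" "length ws = n" by auto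
  have "hd ws = v" unfolding ws_def bv by (rule gram_schmidt_hd[OF v(1)])
  then have "ws ! 0 = v" using \<open>n \<noteq> 0\<close> ws(3) by (metis hd_conv_nth list.size(3))
  define N where "N = complex_of_real (sqrt (\<Sum>i<n. (cmod (ws ! 0 $ i))\<^sup>2))"
  have "col (mat n n (\<lambda>(i,j). ws ! j $ i / complex_of_real (sqrt (\<Sum>i<n. (cmod (ws ! j $ i))\<^sup>2)))) 0
        = (1 / N) \<cdot>\<^sub>v v"
    using \<open>n \<noteq> 0\<close> v \<open>ws ! 0 = v\<close> by (intro eq_vecI) (auto simp: N_def)
  with unitary_mat_normalize_corthogonal[OF ws] show thesis by (rule that)
qed

lemma four_block_mat_split_first:
  assumes "M \<in> carrier_mat (Suc m) (Suc m)"
    and "\<And>i. 0 < i \<Longrightarrow> i < Suc m \<Longrightarrow> M $$ (i,0) = 0"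
    and "\<And>j. 0 < j \<Longrightarrow> j < Suc m \<Longrightarrow> M $$ (0,j) = 0"
  shows "M = four_block_mat (mat 1 1 (\<lambda>_. M $$ (0,0))) (0\<^sub>m 1 m) (0\<^sub>m m 1)
               (mat m m (\<lambda>(i,j). M $$ (Suc i, Suc j)))"
  by (rule eq_matI) (use assms in \<open>auto simp: not_less_eq\<close>)

lemma mat_adjoint_four_block_diag:
  assumes "(A :: complex mat) \<in> carrier_mat k k" "U \<in> carrier_mat m m"
  shows "mat_adjoint (four_block_mat A (0\<^sub>m k m) (0\<^sub>m m k) U)
         = four_block_mat (mat_adjoint A) (0\<^sub>m k m) (0\<^sub>m m k) (mat_adjoint U)"
  by (rule eq_matI) (use assms in auto)

lemma mult_four_block_diag:
  assumes "(A :: 'a :: semiring_0 mat) \<in> carrier_mat k k" "B \<in> carrier_mat k k"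
    and "U \<in> carrier_mat m m" "V \<in> carrier_mat m m"
  shows "four_block_mat A (0\<^sub>m k m) (0\<^sub>m m k) U * four_block_mat B (0\<^sub>m k m) (0\<^sub>m m k) V
         = four_block_mat (A * B) (0\<^sub>m k m) (0\<^sub>m m k) (U * V)"
  using assms
  by (subst mult_four_block_mat[OF assms(1) zero_carrier_mat zero_carrier_mat assms(3)
        assms(2) zero_carrier_mat zero_carrier_mat assms(4)]) auto

lemma unitary_mat_four_block_diag:
  assumes "unitary_mat k A" "unitary_mat m U"
  shows "unitary_mat (k + m) (four_block_mat A (0\<^sub>m k m) (0\<^sub>m m k) U)"
  using assms unitary_mat_inverse[OF assms(1)] unitary_mat_inverse[OF assms(2)]
  unfolding unitary_mat_def
  by (simp add: mat_adjoint_four_block_diag mult_four_block_diag)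

lemma real_diagonal_mat_four_block_diag:
  assumes "real_diagonal_mat k A" "real_diagonal_mat m D"
  shows "real_diagonal_mat (k + m) (four_block_mat A (0\<^sub>m k m) (0\<^sub>m m k) D)"
  using assms unfolding real_diagonal_mat_def diagonal_mat_def by auto

lemma mult_conj_mat_adjoint:
  assumes "(U :: complex mat) \<in> carrier_mat n n" "V \<in> carrier_mat n n" "M \<in> carrier_mat n n"
  shows "U * (V * M * mat_adjoint V) * mat_adjoint U = (U * V) * M * mat_adjoint (U * V)"
proof -
  have "mat_adjoint U \<in> carrier_mat n n" "mat_adjoint V \<in> carrier_mat n n" "V * M \<in> carrier_mat n n"
    "U * V \<in> carrier_mat n n" "U * V * M \<in> carrier_mat n n"
    "mat_adjoint V * mat_adjoint U \<in> carrier_mat n n" "V * M * mat_adjoint V \<in> carrier_mat n n"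
    using assms by auto
  with assms show ?thesis by (simp add: mat_adjoint_mult[OF assms(1,2)] assoc_mult_mat[of _ n n _ n _ n])
qed

lemma hermitian_mat_unitary_conj:
  assumes "hermitian_mat n A" "unitary_mat n W"
  shows "hermitian_mat n (mat_adjoint W * A * W)"
proof -
  have A: "A \<in> carrier_mat n n" "mat_adjoint A = A" using assms(1) unfolding hermitian_mat_def by auto
  note W = unitary_mat_carrier[OF assms(2)]
  have "mat_adjoint (mat_adjoint W * A * W) = mat_adjoint W * mat_adjoint (mat_adjoint W * A)"
    by (rule mat_adjoint_mult[OF mult_carrier_mat[OF W(2) A(1)] W(1)])
  also have "\<dots> = mat_adjoint W * A * W"
    using A W by (simp add: mat_adjoint_mult[OF W(2) A(1)] assoc_mult_mat[OF W(2) A(1) W(1)])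
  finally show ?thesis
    unfolding hermitian_mat_def using mult_carrier_mat[OF mult_carrier_mat[OF W(2) A(1)] W(1)] by blast
qed

lemma unitary_conj_eigenvector_col:
  assumes "A \<in> carrier_mat n n" "unitary_mat n W" "A *\<^sub>v col W 0 = e \<cdot>\<^sub>v col W 0" "i < n"
  shows "(mat_adjoint W * A * W) $$ (i,0) = (if i = 0 then e else 0)"
proof -
  note W = unitary_mat_carrier[OF assms(2)]
  have "(mat_adjoint W * A * W) $$ (i,0) = row (mat_adjoint W) i \<bullet> col (A * W) 0"
    unfolding assoc_mult_mat[OF W(2) assms(1) W(1)] using assms(1,4) W by (subst index_mult_mat(1)) auto
  also have "\<dots> = row (mat_adjoint W) i \<bullet> (A *\<^sub>v col W 0)"
    using assms(4) by (subst col_mult2[OF assms(1) W(1)]) auto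
  also have "\<dots> = e * (mat_adjoint W * W) $$ (i,0)"
    unfolding assms(3) using assms(4) W by (subst scalar_prod_smult_right) auto
  finally show ?thesis using unitary_mat_inverse(2)[OF assms(2)] assms(4) by simp
qed

lemma hermitian_mat_deflate:
  assumes "hermitian_mat (Suc m) A"
  obtains W e A' where "unitary_mat (Suc m) W" "e \<in> \<real>" "hermitian_mat m A'"
    "A = W * four_block_mat (mat 1 1 (\<lambda>_. e)) (0\<^sub>m 1 m) (0\<^sub>m m 1) A' * mat_adjoint W"
proof -
  define n where "n = Suc m"
  have A: "A \<in> carrier_mat n n" using assms unfolding hermitian_mat_def n_def by auto
  obtain e where "eigenvalue A e" using spectrum_non_empty[OF A] unfolding spectrum_def n_def by auto
  then obtain v where v: "v \<in> carrier_vec n" "v \<noteq> 0\<^sub>v n" "A *\<^sub>v v = e \<cdot>\<^sub>v v"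
    unfolding eigenvalue_def eigenvector_def using A by auto
  obtain W c where W: "unitary_mat n W" and Wv: "col W 0 = c \<cdot>\<^sub>v v"
    using unitary_mat_first_col[OF v(1,2)] by blast
  have "A *\<^sub>v col W 0 = e \<cdot>\<^sub>v col W 0"
    unfolding Wv mult_mat_vec[OF A v(1)] v(3) by (simp add: smult_smult_assoc mult.commute)
  note M_col = unitary_conj_eigenvector_col[OF A W this]
  define M where "M = mat_adjoint W * A * W"
  have "hermitian_mat n M" unfolding M_def n_def by (rule hermitian_mat_unitary_conj[OF assms W[unfolded n_def]])
  then have M: "M \<in> carrier_mat n n" "mat_adjoint M = M" unfolding hermitian_mat_def by auto
  have M_herm: "M $$ (i,j) = cnj (M $$ (j,i))" if "i < n" "j < n" for i j
    using that M index_mat_adjoint[of i M j] by (metis carrier_matD)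
  have "e \<in> \<real>" using M_herm[of 0 0] M_col[of 0] by (simp add: M_def n_def Reals_cnj_iff)
  define A' where "A' = mat m m (\<lambda>(i,j). M $$ (Suc i, Suc j))"
  have "mat_adjoint A' = A'"
  proof (rule eq_matI)
    fix i j assume "i < dim_row A'" "j < dim_col A'"
    then show "mat_adjoint A' $$ (i,j) = A' $$ (i,j)"
      using M_herm[of "Suc i" "Suc j"] by (simp add: A'_def n_def)
  qed (simp_all add: A'_def)
  then have "hermitian_mat m A'" unfolding hermitian_mat_def A'_def by simp
  have col0: "M $$ (i,0) = 0" if "0 < i" "i < n" for i using M_col[OF that(2)] that by (simp add: M_def)
  have row0: "M $$ (0,j) = 0" if "0 < j" "j < n" for j using M_herm[of 0 j] col0[of j] that by simp
  have "M $$ (0,0) = e" using M_col[of 0] by (simp add: M_def n_def)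
  then have "M = four_block_mat (mat 1 1 (\<lambda>_. e)) (0\<^sub>m 1 m) (0\<^sub>m m 1) A'"
    using four_block_mat_split_first[of M m] M(1) col0 row0 unfolding A'_def n_def by simp
  moreover have "A = W * M * mat_adjoint W"
  proof -
    note Wc = unitary_mat_carrier[OF W]
    have "W * M = A * W"
      unfolding M_def assoc_mult_mat[OF Wc(2) A Wc(1)] by (rule unitary_mat_cancel(1)[OF W mult_carrier_mat[OF A Wc(1)]])
    then show ?thesis using assoc_mult_mat[OF A Wc] unitary_mat_inverse(1)[OF W] A by simp
  qed
  ultimately show thesis
    using that W \<open>e \<in> \<real>\<close> \<open>hermitian_mat m A'\<close> unfolding n_def by blast
qed

theorem hermitian_mat_spectral_decomposition:
  assumes "hermitian_mat n A"
  obtains U D where "unitary_mat n U" "real_diagonal_mat n D" "A = U * D * mat_adjoint U"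
  using assms
proof (induction n arbitrary: A thesis)
  case 0
  then have "A = 1\<^sub>m 0 * 0\<^sub>m 0 0 * mat_adjoint (1\<^sub>m 0)"
    unfolding hermitian_mat_def by (auto intro!: eq_matI)
  then show ?case
    by (rule "0.prems"(1)[rotated 2]) (auto simp: unitary_mat_def real_diagonal_mat_def diagonal_mat_def)
next
  case (Suc m)
  obtain W e A' where W: "unitary_mat (Suc m) W" and e: "e \<in> \<real>" and A': "hermitian_mat m A'"
    and A: "A = W * four_block_mat (mat 1 1 (\<lambda>_. e)) (0\<^sub>m 1 m) (0\<^sub>m m 1) A' * mat_adjoint W"
    using hermitian_mat_deflate[OF Suc.prems(2)] by blast
  obtain U D where U: "unitary_mat m U" and D: "real_diagonal_mat m D"
    and A'_eq: "A' = U * D * mat_adjoint U"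
    using Suc.IH[OF _ A'] by blast
  define E where "E = mat 1 1 (\<lambda>_. e)"
  define V where "V = four_block_mat (1\<^sub>m 1) (0\<^sub>m 1 m) (0\<^sub>m m 1) U"
  define D' where "D' = four_block_mat E (0\<^sub>m 1 m) (0\<^sub>m m 1) D"
  have V: "unitary_mat (Suc m) V"
    using unitary_mat_four_block_diag[of 1 "1\<^sub>m 1" m U] U by (simp add: V_def unitary_mat_def)
  have D': "real_diagonal_mat (Suc m) D'"
    using real_diagonal_mat_four_block_diag[of 1 E m D] D e
    by (simp add: D'_def E_def real_diagonal_mat_def diagonal_mat_def)
  have Dc: "D \<in> carrier_mat m m" "E \<in> carrier_mat 1 1"
    using D unfolding real_diagonal_mat_def E_def by auto
  have "four_block_mat E (0\<^sub>m 1 m) (0\<^sub>m m 1) A' = V * D' * mat_adjoint V"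
    unfolding A'_eq V_def D'_def
    using unitary_mat_carrier[OF U] Dc mult_carrier_mat[OF unitary_mat_carrier(1)[OF U] Dc(1)]
    by (simp add: mat_adjoint_four_block_diag mult_four_block_diag mult_carrier_mat)
  then have "A = (W * V) * D' * mat_adjoint (W * V)"
    using mult_conj_mat_adjoint[of W "Suc m" V D'] unitary_mat_carrier[OF W] unitary_mat_carrier[OF V] D'
    unfolding A E_def real_diagonal_mat_def by auto
  then show ?case using Suc.prems(1) unitary_mat_mult[OF W V] D' by blast
qed

section \<open>Eigenvalues of a unitarily diagonalised matrix\<close>

lemma prod_list_map_remove1:
  "x \<in> set xs \<Longrightarrow> prod_list (map f xs) = (f x :: 'a :: comm_monoid_mult) * prod_list (map f (remove1 x xs))"
  by (induction xs) (auto simp: mult.left_commute)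

lemma linear_factors_eq_imp_mset_eq:
  fixes f :: "'b \<Rightarrow> 'a :: idom"
  assumes "inj f" "(\<Prod>x\<leftarrow>xs. [:- f x, 1:]) = (\<Prod>y\<leftarrow>ys. [:- f y, 1:])"
  shows "mset xs = mset ys"
  using assms(2)
proof (induction xs arbitrary: ys)
  case Nil
  then show ?case using degree_linear_factors[of "\<lambda>y. - f y" ys] by simp
next
  case (Cons x xs)
  have "poly (\<Prod>y\<leftarrow>ys. [:- f y, 1:]) (f x) = 0"
    using Cons.prems[symmetric] by (simp add: poly_prod_list)
  then obtain y where "y \<in> set ys" "f x = f y"
    by (auto simp: poly_prod_list prod_list_zero_iff o_def)
  then have x: "x \<in> set ys" using \<open>inj f\<close> by (auto dest: injD)
  have "(\<Prod>y\<leftarrow>xs. [:- f y, 1:]) = (\<Prod>y\<leftarrow>remove1 x ys. [:- f y, 1:])"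
  proof -
    have "[:- f x, 1:] * (\<Prod>y\<leftarrow>xs. [:- f y, 1:]) = [:- f x, 1:] * (\<Prod>y\<leftarrow>remove1 x ys. [:- f y, 1:])"
      using Cons.prems prod_list_map_remove1[OF x, of "\<lambda>y. [:- f y, 1:]"] by simp
    then show ?thesis by (subst (asm) mult_left_cancel) auto
  qed
  from Cons.IH[OF this] show ?case using x by simp
qed

lemma char_poly_unitary_conj_diagonal:
  assumes "unitary_mat n U" "D \<in> carrier_mat n n" "diagonal_mat D"
  shows "char_poly (U * D * mat_adjoint U) = (\<Prod>i\<leftarrow>[0..<n]. [:- D $$ (i,i), 1:])"
proof -
  have "similar_mat_wit (U * D * mat_adjoint U) D U (mat_adjoint U)"
    using assms unitary_mat_carrier[OF assms(1)] unitary_mat_inverse[OF assms(1)]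
    unfolding similar_mat_wit_def Let_def by auto
  then have "char_poly (U * D * mat_adjoint U) = char_poly D"
    by (intro char_poly_similar) (auto simp: similar_mat_def)
  also have "\<dots> = (\<Prod>a\<leftarrow>diag_mat D. [:- a, 1:])"
    by (rule char_poly_upper_triangular[OF assms(2)]) (use assms(2,3) in \<open>auto simp: diagonal_mat_def upper_triangular_def\<close>)
  also have "diag_mat D = map (\<lambda>i. D $$ (i,i)) [0..<n]"
    using assms(2) unfolding diag_mat_def by auto
  finally show ?thesis by (simp add: o_def)
qed

lemma eigenvalues_unitary_conj_diagonal:
  assumes "unitary_mat n U" "D \<in> carrier_mat n n" "diagonal_mat D"
  shows "{e. eigenvalue (U * D * mat_adjoint U) e} = (\<lambda>i. D $$ (i,i)) ` {..<n}"
proof -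
  have "U * D * mat_adjoint U \<in> carrier_mat n n" using assms unitary_mat_carrier[OF assms(1)] by auto
  then show ?thesis
    by (auto simp: eigenvalue_root_char_poly char_poly_unitary_conj_diagonal[OF assms]
        poly_prod_list prod_list_zero_iff o_def)
qed

lemma prod_list_map_sort:
  "prod_list (map f (sort xs)) = (prod_list (map f xs) :: 'b :: comm_monoid_mult)"
  by (metis mset_map mset_sort prod_mset_prod_list)

lemma eig_list_unitary_conj_diagonal:
  assumes "unitary_mat n U" "real_diagonal_mat n D"
  shows "eig_list n (U * D * mat_adjoint U) = sort (map (\<lambda>i. Re (D $$ (i,i))) [0..<n])"
proof -
  let ?ds = "map (\<lambda>i. Re (D $$ (i,i))) [0..<n]"
  have D: "D \<in> carrier_mat n n" "diagonal_mat D" "\<And>i. i < n \<Longrightarrow> D $$ (i,i) \<in> \<real>"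
    using assms(2) unfolding real_diagonal_mat_def by auto
  have "char_poly (U * D * mat_adjoint U) = (\<Prod>i\<leftarrow>[0..<n]. [:- complex_of_real (Re (D $$ (i,i))), 1:])"
    unfolding char_poly_unitary_conj_diagonal[OF assms(1) D(1,2)] using D(3)
    by (intro arg_cong[where f = prod_list] map_cong) auto
  also have "\<dots> = (\<Prod>e\<leftarrow>sort ?ds. [:- complex_of_real e, 1:])"
    by (simp add: prod_list_map_sort o_def)
  finally have cp: "char_poly (U * D * mat_adjoint U) = (\<Prod>e\<leftarrow>sort ?ds. [:- complex_of_real e, 1:])" .
  have "es = sort ?ds" if "sorted es"
    and "char_poly (U * D * mat_adjoint U) = (\<Prod>e\<leftarrow>es. [:- complex_of_real e, 1:])" for es
  proof -
    have "(\<Prod>e\<leftarrow>es. [:- complex_of_real e, 1:]) = (\<Prod>e\<leftarrow>sort ?ds. [:- complex_of_real e, 1:])"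
      using that(2) cp by simp
    then have "mset es = mset (sort ?ds)" by (rule linear_factors_eq_imp_mset_eq[OF inj_of_real])
    then show ?thesis using properties_for_sort[OF _ that(1)] by simp
  qed
  with cp show ?thesis unfolding eig_list_def by (intro the_equality) auto
qed

section \<open>Counting eigenvalues in H(d; l_1, ..., l_r)\<close>

lemma card_image_le_if_constant_on_disjoint:
  assumes "finite S" "finite R" "\<And>j. j \<in> R \<Longrightarrow> J j \<subseteq> S" "disjoint_family_on J R"
    and "\<And>j i i'. j \<in> R \<Longrightarrow> i \<in> J j \<Longrightarrow> i' \<in> J j \<Longrightarrow> f i = f i'"
  shows "card (f ` S) + (\<Sum>j\<in>R. card (J j)) \<le> card S + card R"
proof -
  define T where "T = (\<Union>j\<in>R. J j)"
  have fin: "finite (J j)" if "j \<in> R" for j using finite_subset[OF assms(3)[OF that] assms(1)] .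
  have "T \<subseteq> S" unfolding T_def using assms(3) by auto
  have card_T: "card T = (\<Sum>j\<in>R. card (J j))"
    unfolding T_def using assms(2,4) fin by (intro card_UN_disjoint) (auto simp: disjoint_family_on_def)
  have "card (f ` J j) \<le> Suc 0" if "j \<in> R" for j
    unfolding card_le_Suc0_iff_eq[OF finite_imageI[OF fin[OF that]]] using assms(5)[OF that] by blast
  then have "(\<Sum>j\<in>R. card (f ` J j)) \<le> (\<Sum>j\<in>R. 1)" by (intro sum_mono) simp
  then have card_blocks: "card (\<Union>j\<in>R. f ` J j) \<le> card R"
    using card_UN_le[OF assms(2), of "\<lambda>j. f ` J j"] by simp
  have "f ` S \<subseteq> f ` (S - T) \<union> (\<Union>j\<in>R. f ` J j)" unfolding T_def by auto
  then have "card (f ` S) \<le> card (f ` (S - T) \<union> (\<Union>j\<in>R. f ` J j))"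
    using assms(1,2) fin by (intro card_mono) auto
  also have "\<dots> \<le> card (f ` (S - T)) + card (\<Union>j\<in>R. f ` J j)" by (rule card_Un_le)
  also have "card (f ` (S - T)) \<le> card S - card T"
    using card_image_le[of "S - T" f] card_Diff_subset[OF finite_subset[OF \<open>T \<subseteq> S\<close> assms(1)] \<open>T \<subseteq> S\<close>]
      assms(1) by simp
  finally show ?thesis using card_T card_blocks card_mono[OF assms(1) \<open>T \<subseteq> S\<close>] by linarith
qed

lemma eigenvalues_hermitian_mat:
  assumes "hermitian_mat d B"
  shows "{e. eigenvalue B e} = complex_of_real ` E d B ` {1..d}"
proof -
  obtain U D where U: "unitary_mat d U" and D: "real_diagonal_mat d D" and B: "B = U * D * mat_adjoint U"
    using hermitian_mat_spectral_decomposition[OF assms] .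
  have "E d B ` {1..d} = (\<lambda>i. eig_list d B ! i) ` {..<d}"
    unfolding E_def image_Suc_lessThan[symmetric] image_image by simp
  also have "\<dots> = set (eig_list d B)"
    using eig_list_unitary_conj_diagonal[OF U D] unfolding B by (auto simp: set_conv_nth)
  also have "\<dots> = (\<lambda>i. Re (D $$ (i,i))) ` {..<d}"
    unfolding B eig_list_unitary_conj_diagonal[OF U D] by auto
  finally have "complex_of_real ` E d B ` {1..d} = (\<lambda>i. D $$ (i,i)) ` {..<d}"
    using D unfolding real_diagonal_mat_def by (force simp: image_image)
  then show ?thesis
    using D unfolding B real_diagonal_mat_def by (simp add: eigenvalues_unitary_conj_diagonal[OF U])
qed

lemma card_eigenvalues_Hset:
  assumes "B \<in> Hset d r ls"
  shows "card {e. eigenvalue B e} + (\<Sum>j=1..r. ls j) \<le> d + r"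
proof -
  obtain J :: "nat \<Rightarrow> nat set" where J: "\<forall>j\<in>{1..r}. J j \<subseteq> {1..d} \<and> card (J j) = ls j"
    and disj: "\<forall>j\<in>{1..r}. \<forall>j'\<in>{1..r}. j \<noteq> j' \<longrightarrow> J j \<inter> J j' = {}"
    and const: "\<forall>j\<in>{1..r}. \<forall>i\<in>J j. \<forall>i'\<in>J j. E d B i = E d B i'"
    and B: "hermitian_mat d B"
    using assms unfolding Hset_def by blast
  have "card {e. eigenvalue B e} = card (E d B ` {1..d})"
    unfolding eigenvalues_hermitian_mat[OF B] by (rule card_image) (simp add: inj_on_def)
  moreover have "card (E d B ` {1..d}) + (\<Sum>j=1..r. card (J j)) \<le> card {1..d} + card {1..r}"
  proof (rule card_image_le_if_constant_on_disjoint)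
    show "disjoint_family_on J {1..r}" using disj unfolding disjoint_family_on_def by blast
    show "J j \<subseteq> {1..d}" if "j \<in> {1..r}" for j using J that by blast
    show "E d B i = E d B i'" if "j \<in> {1..r}" "i \<in> J j" "i' \<in> J j" for j i i'
      using const that by blast
  qed simp_all
  ultimately show ?thesis using J by simp
qed

section \<open>Entrywise convergence of matrices\<close>

definition mat_tendsto :: "nat \<Rightarrow> (nat \<Rightarrow> complex mat) \<Rightarrow> complex mat \<Rightarrow> bool" where
  "mat_tendsto n X Y \<longleftrightarrow> (\<forall>k. X k \<in> carrier_mat n n) \<and> Y \<in> carrier_mat n n \<and>
     (\<forall>i<n. \<forall>j<n. (\<lambda>k. X k $$ (i,j)) \<longlonglongrightarrow> Y $$ (i,j))"

lemma mat_tendstoD: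
  assumes "mat_tendsto n X Y"
  shows "X k \<in> carrier_mat n n" "Y \<in> carrier_mat n n"
    "i < n \<Longrightarrow> j < n \<Longrightarrow> (\<lambda>k. X k $$ (i,j)) \<longlonglongrightarrow> Y $$ (i,j)"
  using assms unfolding mat_tendsto_def by auto

lemma mat_tendsto_const: "Y \<in> carrier_mat n n \<Longrightarrow> mat_tendsto n (\<lambda>k. Y) Y"
  unfolding mat_tendsto_def by auto

lemma mat_tendsto_mult:
  assumes "mat_tendsto n X Y" "mat_tendsto n X' Y'"
  shows "mat_tendsto n (\<lambda>k. X k * X' k) (Y * Y')"
  unfolding mat_tendsto_def
proof (intro conjI allI impI)
  note c = mat_tendstoD(1,2)[OF assms(1)] mat_tendstoD(1,2)[OF assms(2)]
  show "X k * X' k \<in> carrier_mat n n" for k using mult_carrier_mat[OF c(1) c(3)] .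
  show "Y * Y' \<in> carrier_mat n n" using mult_carrier_mat[OF c(2) c(4)] .
  fix i j assume ij: "i < n" "j < n"
  have "(\<lambda>k. (X k * X' k) $$ (i,j)) = (\<lambda>k. \<Sum>t<n. X k $$ (i,t) * X' k $$ (t,j))"
    by (intro ext index_mult_mat_sum[OF c(1) c(3) ij])
  moreover have "(Y * Y') $$ (i,j) = (\<Sum>t<n. Y $$ (i,t) * Y' $$ (t,j))"
    by (rule index_mult_mat_sum[OF c(2) c(4) ij])
  moreover have "(\<lambda>k. \<Sum>t<n. X k $$ (i,t) * X' k $$ (t,j)) \<longlonglongrightarrow> (\<Sum>t<n. Y $$ (i,t) * Y' $$ (t,j))"
    using ij by (intro tendsto_sum tendsto_mult mat_tendstoD(3)[OF assms(1)] mat_tendstoD(3)[OF assms(2)]) auto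
  ultimately show "(\<lambda>k. (X k * X' k) $$ (i,j)) \<longlonglongrightarrow> (Y * Y') $$ (i,j)" by simp
qed

lemma mat_tendsto_adjoint:
  assumes "mat_tendsto n X Y"
  shows "mat_tendsto n (\<lambda>k. mat_adjoint (X k)) (mat_adjoint Y)"
  unfolding mat_tendsto_def
proof (intro conjI allI impI)
  note c = mat_tendstoD(1,2)[OF assms]
  show "mat_adjoint (X k) \<in> carrier_mat n n" for k using c by auto
  show "mat_adjoint Y \<in> carrier_mat n n" using c by auto
  fix i j assume ij: "i < n" "j < n"
  have "(\<lambda>k. cnj (X k $$ (j,i))) \<longlonglongrightarrow> cnj (Y $$ (j,i))"
    using ij by (intro tendsto_cnj mat_tendstoD(3)[OF assms])
  moreover have "mat_adjoint (X k) $$ (i,j) = cnj (X k $$ (j,i))" for k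
    using ij carrier_matD[OF c(1)[of k]] by (intro index_mat_adjoint) simp_all
  moreover have "mat_adjoint Y $$ (i,j) = cnj (Y $$ (j,i))"
    using ij carrier_matD[OF c(2)] by (intro index_mat_adjoint) simp_all
  ultimately show "(\<lambda>k. mat_adjoint (X k) $$ (i,j)) \<longlonglongrightarrow> mat_adjoint Y $$ (i,j)" by simp
qed

lemma mat_tendsto_subseq:
  assumes "mat_tendsto n X Y" "strict_mono \<sigma>"
  shows "mat_tendsto n (\<lambda>k. X (\<sigma> k)) Y"
  unfolding mat_tendsto_def
proof (intro conjI allI impI)
  show "X (\<sigma> k) \<in> carrier_mat n n" for k using mat_tendstoD(1)[OF assms(1)] .
  show "Y \<in> carrier_mat n n" using mat_tendstoD(2)[OF assms(1)] .
  show "(\<lambda>k. X (\<sigma> k) $$ (i,j)) \<longlonglongrightarrow> Y $$ (i,j)" if "i < n" "j < n" for i j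
    using LIMSEQ_subseq_LIMSEQ[OF mat_tendstoD(3)[OF assms(1) that] assms(2)] by (simp add: o_def)
qed

lemma mat_tendsto_unique:
  assumes "mat_tendsto n X Y" "mat_tendsto n X Y'"
  shows "Y = Y'"
proof (rule eq_matI)
  show "dim_row Y = dim_row Y'" "dim_col Y = dim_col Y'"
    using mat_tendstoD(2)[OF assms(1)] mat_tendstoD(2)[OF assms(2)] by auto
  show "Y $$ (i,j) = Y' $$ (i,j)" if "i < dim_row Y'" "j < dim_col Y'" for i j
    using that mat_tendstoD(2)[OF assms(2)]
      LIMSEQ_unique[OF mat_tendstoD(3)[OF assms(1)] mat_tendstoD(3)[OF assms(2)]] by auto
qed

lemma mat_tendsto_eventually_close:
  assumes "mat_tendsto n X Y" "\<epsilon> > 0"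
  shows "eventually (\<lambda>k. \<forall>i<n. \<forall>j<n. cmod (X k $$ (i,j) - Y $$ (i,j)) < \<epsilon>) sequentially"
proof -
  have "eventually (\<lambda>k. \<forall>i\<in>{..<n}. \<forall>j\<in>{..<n}. cmod (X k $$ (i,j) - Y $$ (i,j)) < \<epsilon>) sequentially"
    using tendstoD[OF mat_tendstoD(3)[OF assms(1)] assms(2)]
    by (intro eventually_ball_finite ballI) (auto simp: dist_norm)
  then show ?thesis by (rule eventually_mono) simp
qed

lemma LIMSEQ_if_norm_diff_less_inverse_Suc:
  fixes a :: "'a :: real_normed_vector"
  assumes "\<And>k. norm (a - b k) < 1 / real (Suc k)"
  shows "b \<longlonglongrightarrow> a"
proof -
  have "(\<lambda>k. a - b k) \<longlonglongrightarrow> 0" using assms by (rule LIMSEQ_norm_0)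
  from tendsto_diff[OF tendsto_const[of a] this] have "(\<lambda>k. a - (a - b k)) \<longlonglongrightarrow> a - 0" .
  then show ?thesis by simp
qed

lemma bounded_family_convergent_subseq:
  fixes x :: "nat \<Rightarrow> 'i \<Rightarrow> 'a :: heine_borel"
  assumes "finite S" "\<And>s. s \<in> S \<Longrightarrow> bounded (range (\<lambda>k. x k s))"
  obtains \<sigma> L where "strict_mono \<sigma>" "\<And>s. s \<in> S \<Longrightarrow> (\<lambda>k. x (\<sigma> k) s) \<longlonglongrightarrow> L s"
  using assms
proof (induction S arbitrary: thesis rule: finite_induct)
  case empty
  then show ?case using strict_mono_id by blast
next
  case (insert a S)
  obtain \<sigma> L where \<sigma>: "strict_mono \<sigma>" and L: "\<And>s. s \<in> S \<Longrightarrow> (\<lambda>k. x (\<sigma> k) s) \<longlonglongrightarrow> L s"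
    using insert.IH insert.prems(2) by blast
  have "bounded (range (\<lambda>k. x (\<sigma> k) a))"
    using insert.prems(2)[of a] by (rule bounded_subset) auto
  then obtain c \<tau> where \<tau>: "strict_mono \<tau>" and c: "((\<lambda>k. x (\<sigma> k) a) \<circ> \<tau>) \<longlonglongrightarrow> c"
    using bounded_imp_convergent_subsequence by blast
  have "(\<lambda>k. x ((\<sigma> \<circ> \<tau>) k) s) \<longlonglongrightarrow> (L(a := c)) s" if "s \<in> insert a S" for s
  proof (cases "s = a")
    case False
    then have "s \<in> S" using that by simp
    then have "((\<lambda>k. x (\<sigma> k) s) \<circ> \<tau>) \<longlonglongrightarrow> L s" by (rule LIMSEQ_subseq_LIMSEQ[OF L \<tau>])
    then show ?thesis using False by (simp add: o_def)
  qed (use c in \<open>simp add: o_def\<close>)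
  then show ?case using insert.prems(1) strict_mono_o[OF \<sigma> \<tau>] by blast
qed

lemma unitary_mat_convergent_subseq:
  fixes Q :: "nat \<Rightarrow> complex mat"
  assumes "\<And>k. unitary_mat n (Q k)"
  obtains \<sigma> Q0 where "strict_mono \<sigma>" "mat_tendsto n (\<lambda>k. Q (\<sigma> k)) Q0" "unitary_mat n Q0"
proof -
  have "bounded (range (\<lambda>k. Q k $$ s))" if "s \<in> {..<n} \<times> {..<n}" for s
    using assms that norm_unitary_mat_entry_le[of n] by (intro boundedI[of _ 1]) auto
  then obtain \<sigma> L where \<sigma>: "strict_mono \<sigma>"
    and L: "\<And>s. s \<in> {..<n} \<times> {..<n} \<Longrightarrow> (\<lambda>k. Q (\<sigma> k) $$ s) \<longlonglongrightarrow> L s"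
    using bounded_family_convergent_subseq[where S = "{..<n} \<times> {..<n}" and x = "\<lambda>k s. Q k $$ s"] by blast
  define Q0 where "Q0 = mat n n L"
  have lim: "mat_tendsto n (\<lambda>k. Q (\<sigma> k)) Q0"
    unfolding mat_tendsto_def Q0_def using L assms unitary_mat_carrier by auto
  have one: "(\<lambda>k. Q (\<sigma> k) * mat_adjoint (Q (\<sigma> k))) = (\<lambda>k. 1\<^sub>m n)"
    "(\<lambda>k. mat_adjoint (Q (\<sigma> k)) * Q (\<sigma> k)) = (\<lambda>k. 1\<^sub>m n)"
    using unitary_mat_inverse[OF assms] by auto
  have "Q0 * mat_adjoint Q0 = 1\<^sub>m n"
    using mat_tendsto_mult[OF lim mat_tendsto_adjoint[OF lim]] unfolding one
    by (rule mat_tendsto_unique[OF _ mat_tendsto_const[OF one_carrier_mat]])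
  moreover have "mat_adjoint Q0 * Q0 = 1\<^sub>m n"
    using mat_tendsto_mult[OF mat_tendsto_adjoint[OF lim] lim] unfolding one
    by (rule mat_tendsto_unique[OF _ mat_tendsto_const[OF one_carrier_mat]])
  ultimately have "unitary_mat n Q0" unfolding unitary_mat_def Q0_def by auto
  with \<sigma> lim show thesis by (rule that)
qed

lemma real_diagonal_mat_limit:
  assumes "mat_tendsto n F F0" "\<And>k. real_diagonal_mat n (F k)"
  shows "real_diagonal_mat n F0"
proof -
  note lim = mat_tendstoD(3)[OF assms(1)]
  have F: "F k \<in> carrier_mat n n" "diagonal_mat (F k)" "\<And>i. i < n \<Longrightarrow> F k $$ (i,i) \<in> \<real>" for k
    using assms(2)[of k] unfolding real_diagonal_mat_def by auto
  have F0: "F0 \<in> carrier_mat n n" using mat_tendstoD(2)[OF assms(1)] .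
  have "F0 $$ (i,j) = 0" if ij: "i < n" "j < n" "i \<noteq> j" for i j
  proof -
    have "(\<lambda>k. F k $$ (i,j)) = (\<lambda>k. 0)"
      using F(1,2) ij unfolding diagonal_mat_def carrier_mat_def by auto
    then have "(\<lambda>k. 0) \<longlonglongrightarrow> F0 $$ (i,j)" using lim[OF ij(1,2)] by simp
    then show ?thesis by (simp add: LIMSEQ_const_iff)
  qed
  moreover have "F0 $$ (i,i) \<in> \<real>" if "i < n" for i
  proof -
    have "(\<lambda>k. Im (F k $$ (i,i))) = (\<lambda>k. 0)" using F(3)[OF that] by (simp add: complex_is_Real_iff)
    moreover have "(\<lambda>k. Im (F k $$ (i,i))) \<longlonglongrightarrow> Im (F0 $$ (i,i))"
      using that by (intro tendsto_Im lim)
    ultimately have "(\<lambda>k. 0) \<longlonglongrightarrow> Im (F0 $$ (i,i))" by simp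
    then show ?thesis by (simp add: LIMSEQ_const_iff complex_is_Real_iff)
  qed
  ultimately show ?thesis using F0 unfolding real_diagonal_mat_def diagonal_mat_def by auto
qed

section \<open>Stability of spectral decompositions\<close>

lemma spectral_decomposition_limit:
  fixes Q F :: "nat \<Rightarrow> complex mat"
  assumes "\<And>k. unitary_mat n (Q k)" "\<And>k. real_diagonal_mat n (F k)"
    and "mat_tendsto n (\<lambda>k. Q k * F k * mat_adjoint (Q k)) A"
  obtains \<sigma> Q0 F0 where "strict_mono \<sigma>" "unitary_mat n Q0" "real_diagonal_mat n F0"
    "A = Q0 * F0 * mat_adjoint Q0" "mat_tendsto n (\<lambda>k. Q (\<sigma> k)) Q0" "mat_tendsto n (\<lambda>k. F (\<sigma> k)) F0"
proof -
  obtain \<sigma> Q0 where \<sigma>: "strict_mono \<sigma>" and lim_Q: "mat_tendsto n (\<lambda>k. Q (\<sigma> k)) Q0"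
    and Q0: "unitary_mat n Q0"
    by (rule unitary_mat_convergent_subseq[OF assms(1)])
  have A: "A \<in> carrier_mat n n" using mat_tendstoD(2)[OF assms(3)] .
  have Q0c: "Q0 \<in> carrier_mat n n" "mat_adjoint Q0 \<in> carrier_mat n n" using unitary_mat_carrier[OF Q0] by auto
  define F0 where "F0 = mat_adjoint Q0 * A * Q0"
  have "F k = mat_adjoint (Q k) * (Q k * F k * mat_adjoint (Q k)) * Q k" for k
  proof -
    have c: "Q k \<in> carrier_mat n n" "mat_adjoint (Q k) \<in> carrier_mat n n" "F k \<in> carrier_mat n n"
      using unitary_mat_carrier[OF assms(1)] assms(2) unfolding real_diagonal_mat_def by auto
    then show ?thesis
      using unitary_mat_cancel(2)[OF assms(1) mult_carrier_mat[OF c(3,2)]] unitary_mat_inverse(2)[OF assms(1)]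
      by (simp add: assoc_mult_mat[of _ n n _ n _ n])
  qed
  then have "mat_tendsto n (\<lambda>k. F (\<sigma> k)) F0"
    using mat_tendsto_mult[OF mat_tendsto_mult[OF mat_tendsto_adjoint[OF lim_Q]
          mat_tendsto_subseq[OF assms(3) \<sigma>]] lim_Q]
    unfolding F0_def by simp
  moreover have "real_diagonal_mat n F0" using real_diagonal_mat_limit[OF calculation assms(2)] .
  moreover have "A = Q0 * F0 * mat_adjoint Q0"
  proof -
    have "Q0 * F0 = A * Q0"
      unfolding F0_def assoc_mult_mat[OF Q0c(2) A Q0c(1)]
      by (rule unitary_mat_cancel(1)[OF Q0 mult_carrier_mat[OF A Q0c(1)]])
    then show ?thesis using assoc_mult_mat[OF A Q0c] unitary_mat_inverse(1)[OF Q0] A by simp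
  qed
  ultimately show thesis using that \<sigma> Q0 lim_Q by blast
qed

lemma eventually_distinct_if_limits_distinct:
  fixes g :: "'b \<Rightarrow> 'i \<Rightarrow> 'a :: real_normed_vector"
  assumes "finite I" "\<And>i. i \<in> I \<Longrightarrow> ((\<lambda>k. g k i) \<longlongrightarrow> f i) F"
  shows "eventually (\<lambda>k. \<forall>i\<in>I. \<forall>j\<in>I. f i \<noteq> f j \<longrightarrow> g k i \<noteq> g k j) F"
proof -
  have "eventually (\<lambda>k. f i \<noteq> f j \<longrightarrow> g k i \<noteq> g k j) F" if "i \<in> I" "j \<in> I" for i j
  proof (cases "f i = f j")
    case False
    have "((\<lambda>k. g k i - g k j) \<longlongrightarrow> f i - f j) F" using assms(2) that by (intro tendsto_diff)
    moreover have "f i - f j \<noteq> 0" using False by simp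
    ultimately have "eventually (\<lambda>k. g k i - g k j \<noteq> 0) F" by (rule tendsto_imp_eventually_ne)
    then show ?thesis by (rule eventually_mono) simp
  qed simp
  then show ?thesis using assms(1) by (intro eventually_ball_finite ballI) auto
qed

lemma card_image_le_imp_same_fibres:
  assumes "finite I" "\<And>i j. i \<in> I \<Longrightarrow> j \<in> I \<Longrightarrow> a i \<noteq> a j \<Longrightarrow> b i \<noteq> b j"
    and "card (b ` I) \<le> card (a ` I)"
  shows "card (b ` I) = card (a ` I)" "\<And>i j. i \<in> I \<Longrightarrow> j \<in> I \<Longrightarrow> a i = a j \<Longrightarrow> b i = b j"
proof -
  define h where "h y = a (SOME i. i \<in> I \<and> b i = y)" for y
  have h: "h (b i) = a i" if "i \<in> I" for i
  proof -
    define i' where "i' = (SOME i'. i' \<in> I \<and> b i' = b i)"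
    have "i' \<in> I \<and> b i' = b i"
      using someI_ex[of "\<lambda>i'. i' \<in> I \<and> b i' = b i"] that unfolding i'_def by blast
    then have "a i' = a i" using assms(2)[of i' i] that by blast
    then show ?thesis unfolding h_def i'_def .
  qed
  then have h_image: "h ` b ` I = a ` I" by (auto simp: image_image)
  then have "card (a ` I) \<le> card (b ` I)" using card_image_le[of "b ` I" h] assms(1) by simp
  then show card_eq: "card (b ` I) = card (a ` I)" using assms(3) by simp
  have "inj_on h (b ` I)" using assms(1) h_image card_eq by (intro eq_card_imp_inj_on) auto
  then show "b i = b j" if "i \<in> I" "j \<in> I" "a i = a j" for i j
    using inj_onD[of h "b ` I" "b i" "b j"] h that by simp
qed

lemma eigenvalue_fibres_if_card_le:
  assumes "unitary_mat d Q0" "real_diagonal_mat d F0" "unitary_mat d Q" "real_diagonal_mat d F"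
    and sep: "\<And>i j. i < d \<Longrightarrow> j < d \<Longrightarrow> F0 $$ (i,i) \<noteq> F0 $$ (j,j) \<Longrightarrow> F $$ (i,i) \<noteq> F $$ (j,j)"
    and card_le: "card {e. eigenvalue (Q * F * mat_adjoint Q) e} \<le> card {e. eigenvalue (Q0 * F0 * mat_adjoint Q0) e}"
  shows "card {e. eigenvalue (Q * F * mat_adjoint Q) e} = card {e. eigenvalue (Q0 * F0 * mat_adjoint Q0) e}"
    and "\<And>i j. i < d \<Longrightarrow> j < d \<Longrightarrow> F0 $$ (i,i) = F0 $$ (j,j) \<Longrightarrow> F $$ (i,i) = F $$ (j,j)"
proof -
  have eig: "{e. eigenvalue (Q * F * mat_adjoint Q) e} = (\<lambda>i. F $$ (i,i)) ` {..<d}"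
    "{e. eigenvalue (Q0 * F0 * mat_adjoint Q0) e} = (\<lambda>i. F0 $$ (i,i)) ` {..<d}"
    using assms(1-4) unfolding real_diagonal_mat_def by (simp_all add: eigenvalues_unitary_conj_diagonal)
  have sep': "F $$ (i,i) \<noteq> F $$ (j,j)" if "i \<in> {..<d}" "j \<in> {..<d}" "F0 $$ (i,i) \<noteq> F0 $$ (j,j)" for i j
    using sep that by blast
  have "card ((\<lambda>i. F $$ (i,i)) ` {..<d}) \<le> card ((\<lambda>i. F0 $$ (i,i)) ` {..<d})"
    using card_le unfolding eig .
  note fibres = card_image_le_imp_same_fibres[OF finite_lessThan sep' this]
  show "card {e. eigenvalue (Q * F * mat_adjoint Q) e} = card {e. eigenvalue (Q0 * F0 * mat_adjoint Q0) e}"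
    unfolding eig by (rule fibres(1))
  show "F $$ (i,i) = F $$ (j,j)" if "i < d" "j < d" "F0 $$ (i,i) = F0 $$ (j,j)" for i j
    using fibres(2)[of i j] that by blast
qed

lemma unitary_conj_diagonal_intertwine:
  assumes "unitary_mat n P" "D \<in> carrier_mat n n" "unitary_mat n Q" "F \<in> carrier_mat n n"
    and "P * D * mat_adjoint P = Q * F * mat_adjoint Q"
  shows "F * (mat_adjoint Q * P) = (mat_adjoint Q * P) * D"
proof -
  have c: "P \<in> carrier_mat n n" "mat_adjoint P \<in> carrier_mat n n" "Q \<in> carrier_mat n n"
    "mat_adjoint Q \<in> carrier_mat n n"
    using unitary_mat_carrier assms(1,3) by auto
  have "(mat_adjoint Q * P) * D = mat_adjoint Q * (P * D * mat_adjoint P) * P"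
    using c assms(2) unitary_mat_inverse(2)[OF assms(1)]
    by (simp add: assoc_mult_mat[of _ n n _ n _ n])
  also have "\<dots> = F * (mat_adjoint Q * P)"
    unfolding assms(5) using c assms(4)
      unitary_mat_cancel(2)[OF assms(3) mult_carrier_mat[OF assms(4) mult_carrier_mat[OF c(4,1)]]]
    by (simp add: assoc_mult_mat[of _ n n _ n _ n])
  finally show ?thesis by simp
qed

lemma diagonal_intertwine_entry:
  fixes F D U :: "'a :: idom mat"
  assumes "F \<in> carrier_mat n n" "diagonal_mat F" "D \<in> carrier_mat n n" "diagonal_mat D"
    and "U \<in> carrier_mat n n" "F * U = U * D" "i < n" "j < n" "U $$ (i,j) \<noteq> 0"
  shows "F $$ (i,i) = D $$ (j,j)"
proof -
  have "U $$ (i,j) * F $$ (i,i) = U $$ (i,j) * D $$ (j,j)"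
    unfolding mult.commute[of "U $$ (i,j)" "F $$ (i,i)"] using arg_cong[OF assms(6), of "\<lambda>M. M $$ (i,j)"]
    unfolding index_diagonal_mult_mat[OF assms(1,2,5,7,8)] index_mult_diagonal_mat[OF assms(3,4,5,7,8)] .
  then show ?thesis using assms(9) by simp
qed

text \<open>Column j of U lies in the eigenspace of F0 for D_jj; since F is constant on the eigenspaces
  of F0, it acts on that column as F at any row where the column does not vanish.\<close>

lemma diagonal_intertwine_refine:
  assumes U: "unitary_mat n U"
    and F0: "F0 \<in> carrier_mat n n" "diagonal_mat F0" and D: "D \<in> carrier_mat n n" "diagonal_mat D"
    and F: "F \<in> carrier_mat n n" "diagonal_mat F"
    and intertwine: "F0 * U = U * D"
    and fibres: "\<And>i j. i < n \<Longrightarrow> j < n \<Longrightarrow> F0 $$ (i,i) = F0 $$ (j,j) \<Longrightarrow> F $$ (i,i) = F $$ (j,j)"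
  obtains \<iota> where "\<And>j. j < n \<Longrightarrow> \<iota> j < n \<and> D $$ (j,j) = F0 $$ (\<iota> j, \<iota> j)"
    and "F * U = U * mat n n (\<lambda>(i,j). if i = j then F $$ (\<iota> j, \<iota> j) else 0)"
proof -
  have Uc: "U \<in> carrier_mat n n" using unitary_mat_carrier(1)[OF U] .
  note entry = diagonal_intertwine_entry[OF F0 D Uc intertwine]
  define \<iota> where "\<iota> j = (SOME i. i < n \<and> U $$ (i,j) \<noteq> 0)" for j
  have \<iota>: "\<iota> j < n" "U $$ (\<iota> j, j) \<noteq> 0" if "j < n" for j
    using someI_ex[of "\<lambda>i. i < n \<and> U $$ (i,j) \<noteq> 0"] unitary_mat_col_nonzero[OF U that]
    unfolding \<iota>_def by blast+
  define G where "G = mat n n (\<lambda>(i,j). if i = j then F $$ (\<iota> j, \<iota> j) else 0)"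
  have G: "G \<in> carrier_mat n n" "diagonal_mat G" unfolding G_def diagonal_mat_def by auto
  have FU: "F * U = U * G"
  proof (rule eq_matI)
    fix i j assume "i < dim_row (U * G)" "j < dim_col (U * G)"
    then have ij: "i < n" "j < n" using Uc G by auto
    have "F $$ (i,i) * U $$ (i,j) = U $$ (i,j) * F $$ (\<iota> j, \<iota> j)"
    proof (cases "U $$ (i,j) = 0")
      case False
      then have "F0 $$ (i,i) = F0 $$ (\<iota> j, \<iota> j)" using entry[OF ij] entry[OF \<iota>(1) ij(2) \<iota>(2)] ij by simp
      then show ?thesis using fibres[OF ij(1) \<iota>(1)] ij by simp
    qed simp
    moreover have "G $$ (j,j) = F $$ (\<iota> j, \<iota> j)" using ij(2) unfolding G_def by simp
    ultimately show "(F * U) $$ (i,j) = (U * G) $$ (i,j)"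
      unfolding index_diagonal_mult_mat[OF F Uc ij] index_mult_diagonal_mat[OF G Uc ij] by simp
  qed (use F Uc G in auto)
  have "\<iota> j < n \<and> D $$ (j,j) = F0 $$ (\<iota> j, \<iota> j)" if "j < n" for j
    using \<iota>[OF that] entry[OF \<iota>(1)[OF that] that \<iota>(2)[OF that]] by simp
  from that[OF this FU[unfolded G_def]] show thesis .
qed

definition close_spectral_decomposition ::
  "nat \<Rightarrow> real \<Rightarrow> complex mat \<Rightarrow> complex mat \<Rightarrow> complex mat \<Rightarrow> bool" where
  "close_spectral_decomposition d \<epsilon> P D B \<longleftrightarrow>
     (\<exists>Q F. unitary_mat d Q \<and> real_diagonal_mat d F \<and> B = Q * F * mat_adjoint Q \<and>
        (\<forall>i<d. cmod (D $$ (i,i) - F $$ (i,i)) < \<epsilon>) \<and>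
        (\<forall>i<d. \<forall>j<d. cmod (Q $$ (i,j) - P $$ (i,j)) < \<epsilon>))"

lemma close_spectral_decomposition_realign:
  assumes P: "unitary_mat d P" "real_diagonal_mat d D"
    and Q0: "unitary_mat d Q0" "real_diagonal_mat d F0"
    and A: "P * D * mat_adjoint P = Q0 * F0 * mat_adjoint Q0"
    and Q: "unitary_mat d Q" "real_diagonal_mat d F"
    and fibres: "\<And>i j. i < d \<Longrightarrow> j < d \<Longrightarrow> F0 $$ (i,i) = F0 $$ (j,j) \<Longrightarrow> F $$ (i,i) = F $$ (j,j)"
    and close_F: "\<forall>i<d. cmod (F $$ (i,i) - F0 $$ (i,i)) < \<epsilon>"
    and close_Q: "\<forall>i<d. \<forall>j<d. cmod ((Q * (mat_adjoint Q0 * P)) $$ (i,j) - P $$ (i,j)) < \<epsilon>"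
  shows "close_spectral_decomposition d \<epsilon> P D (Q * F * mat_adjoint Q)"
proof -
  have Dc: "D \<in> carrier_mat d d" "diagonal_mat D" using P(2) unfolding real_diagonal_mat_def by auto
  have F0c: "F0 \<in> carrier_mat d d" "diagonal_mat F0" using Q0(2) unfolding real_diagonal_mat_def by auto
  have Fc: "F \<in> carrier_mat d d" "diagonal_mat F" using Q(2) unfolding real_diagonal_mat_def by auto
  define U where "U = mat_adjoint Q0 * P"
  have U: "unitary_mat d U" unfolding U_def by (rule unitary_mat_mult[OF unitary_mat_adjoint[OF Q0(1)] P(1)])
  have Uc: "U \<in> carrier_mat d d" "mat_adjoint U \<in> carrier_mat d d" using unitary_mat_carrier[OF U] by auto
  have "F0 * U = U * D"
    unfolding U_def by (rule unitary_conj_diagonal_intertwine[OF P(1) Dc(1) Q0(1) F0c(1) A])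
  then obtain \<iota> where \<iota>: "\<And>j. j < d \<Longrightarrow> \<iota> j < d \<and> D $$ (j,j) = F0 $$ (\<iota> j, \<iota> j)"
    and FU: "F * U = U * mat d d (\<lambda>(i,j). if i = j then F $$ (\<iota> j, \<iota> j) else 0)"
    using diagonal_intertwine_refine[OF U F0c Dc Fc _ fibres] by blast
  define G where "G = mat d d (\<lambda>(i,j). if i = j then F $$ (\<iota> j, \<iota> j) else 0)"
  have G: "real_diagonal_mat d G"
    using \<iota> Q(2) unfolding G_def real_diagonal_mat_def diagonal_mat_def by auto
  have Gc: "G \<in> carrier_mat d d" unfolding G_def by simp
  have "F = U * G * mat_adjoint U"
    using FU[folded G_def] Fc(1) Uc unitary_mat_inverse(1)[OF U]
    by (metis assoc_mult_mat right_mult_one_mat)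
  then have "Q * F * mat_adjoint Q = (Q * U) * G * mat_adjoint (Q * U)"
    using mult_conj_mat_adjoint[OF unitary_mat_carrier(1)[OF Q(1)] Uc(1) Gc] by simp
  moreover have "\<forall>i<d. cmod (D $$ (i,i) - G $$ (i,i)) < \<epsilon>"
    using close_F \<iota> unfolding G_def by (auto simp: norm_minus_commute)
  ultimately show ?thesis
    using unitary_mat_mult[OF Q(1) U] G close_Q
    unfolding close_spectral_decomposition_def U_def by blast
qed

lemma close_spectral_decomposition_in_convergent_seq:
  assumes P: "unitary_mat d P" "real_diagonal_mat d D" and A: "A = P * D * mat_adjoint P"
    and B: "\<And>k. hermitian_mat d (B k)" "mat_tendsto d B A"
    and card_le: "\<And>k. card {e. eigenvalue (B k) e} \<le> card {e. eigenvalue A e}"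
    and "\<epsilon> > 0"
  obtains k where "card {e. eigenvalue (B k) e} = card {e. eigenvalue A e}"
    "close_spectral_decomposition d \<epsilon> P D (B k)"
proof -
  have "\<forall>k. \<exists>Q F. unitary_mat d Q \<and> real_diagonal_mat d F \<and> B k = Q * F * mat_adjoint Q"
    using hermitian_mat_spectral_decomposition[OF B(1)] by metis
  then obtain Q F where Q: "\<And>k. unitary_mat d (Q k)" and F: "\<And>k. real_diagonal_mat d (F k)"
    and B_eq: "B = (\<lambda>k. Q k * F k * mat_adjoint (Q k))"
    unfolding choice_iff by auto
  obtain \<sigma> Q0 F0 where Q0: "unitary_mat d Q0" and F0: "real_diagonal_mat d F0"
    and A_eq: "A = Q0 * F0 * mat_adjoint Q0" and lim_Q: "mat_tendsto d (\<lambda>k. Q (\<sigma> k)) Q0"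
    and lim_F: "mat_tendsto d (\<lambda>k. F (\<sigma> k)) F0"
    using spectral_decomposition_limit[OF Q F B(2)[unfolded B_eq]] by metis
  have Pc: "P \<in> carrier_mat d d" using unitary_mat_carrier(1)[OF P(1)] .
  have U: "mat_adjoint Q0 * P \<in> carrier_mat d d"
    using mult_carrier_mat[OF unitary_mat_carrier(2)[OF Q0] Pc] .
  have lim_QU: "mat_tendsto d (\<lambda>k. Q (\<sigma> k) * (mat_adjoint Q0 * P)) P"
    using mat_tendsto_mult[OF lim_Q mat_tendsto_const[OF U]] unitary_mat_cancel(1)[OF Q0 Pc] by simp
  have "eventually (\<lambda>k. \<forall>i\<in>{..<d}. \<forall>j\<in>{..<d}.
      F0 $$ (i,i) \<noteq> F0 $$ (j,j) \<longrightarrow> F (\<sigma> k) $$ (i,i) \<noteq> F (\<sigma> k) $$ (j,j)) sequentially"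
    (is "eventually ?sep _")
    by (rule eventually_distinct_if_limits_distinct) (auto intro: mat_tendstoD(3)[OF lim_F])
  moreover have "eventually (\<lambda>k. \<forall>i<d. \<forall>j<d. cmod (F (\<sigma> k) $$ (i,j) - F0 $$ (i,j)) < \<epsilon>) sequentially"
    (is "eventually ?close_F _")
    by (rule mat_tendsto_eventually_close[OF lim_F \<open>\<epsilon> > 0\<close>])
  moreover have "eventually (\<lambda>k. \<forall>i<d. \<forall>j<d.
      cmod ((Q (\<sigma> k) * (mat_adjoint Q0 * P)) $$ (i,j) - P $$ (i,j)) < \<epsilon>) sequentially"
    (is "eventually ?close_Q _")
    by (rule mat_tendsto_eventually_close[OF lim_QU \<open>\<epsilon> > 0\<close>])
  ultimately have "eventually (\<lambda>k. ?sep k \<and> ?close_F k \<and> ?close_Q k) sequentially"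
    by (simp add: eventually_conj_iff)
  then obtain N where "\<forall>n\<ge>N. ?sep n \<and> ?close_F n \<and> ?close_Q n"
    unfolding eventually_sequentially by (rule exE)
  then have sep: "?sep N" and close_F: "?close_F N" and close_Q: "?close_Q N"
    using order_refl by blast+
  have sep_N: "F (\<sigma> N) $$ (i,i) \<noteq> F (\<sigma> N) $$ (j,j)"
    if "i < d" "j < d" "F0 $$ (i,i) \<noteq> F0 $$ (j,j)" for i j
    using sep that by blast
  note fibres = eigenvalue_fibres_if_card_le[OF Q0 F0 Q F sep_N card_le[of "\<sigma> N", unfolded B_eq A_eq]]
  have PQ0: "P * D * mat_adjoint P = Q0 * F0 * mat_adjoint Q0" using A A_eq by simp
  have close_diag: "\<forall>i<d. cmod (F (\<sigma> N) $$ (i,i) - F0 $$ (i,i)) < \<epsilon>" using close_F by blast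
  have "close_spectral_decomposition d \<epsilon> P D (B (\<sigma> N))"
    unfolding B_eq by (rule close_spectral_decomposition_realign[OF P Q0 F0 PQ0 Q F fibres(2) close_diag close_Q])
  moreover have "card {e. eigenvalue (B (\<sigma> N)) e} = card {e. eigenvalue A e}"
    using fibres(1) unfolding B_eq A_eq .
  ultimately show thesis by (rule that[rotated])
qed

lemma close_spectral_decomposition_nearby:
  assumes P: "unitary_mat d P" "real_diagonal_mat d D" "A = P * D * mat_adjoint P"
    and S: "\<And>B. B \<in> S \<Longrightarrow> hermitian_mat d B"
      "\<And>B. B \<in> S \<Longrightarrow> card {e. eigenvalue B e} \<le> card {e. eigenvalue A e}"
    and "\<epsilon> > 0"
  shows "\<exists>\<delta>>0. \<forall>B\<in>S. (\<forall>i<d. \<forall>j<d. cmod (A $$ (i,j) - B $$ (i,j)) < \<delta>) \<longrightarrow>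
           card {e. eigenvalue B e} = card {e. eigenvalue A e} \<and> close_spectral_decomposition d \<epsilon> P D B"
    (is "\<exists>\<delta>>0. \<forall>B\<in>S. ?near B \<delta> \<longrightarrow> ?good B")
proof (rule ccontr)
  assume "\<not> ?thesis"
  then have "\<forall>k. \<exists>B. B \<in> S \<and> ?near B (1 / real (Suc k)) \<and> \<not> ?good B"
    by (metis of_nat_0_less_iff zero_less_Suc zero_less_divide_1_iff)
  then obtain B where B: "\<And>k. B k \<in> S" "\<And>k. ?near (B k) (1 / real (Suc k))" "\<And>k. \<not> ?good (B k)"
    unfolding choice_iff by blast
  have "mat_tendsto d B A"
    unfolding mat_tendsto_def
  proof (intro conjI allI impI)
    show "B k \<in> carrier_mat d d" for k using S(1)[OF B(1)] unfolding hermitian_mat_def by blast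
    show "A \<in> carrier_mat d d" using P unfolding P(3) by (auto simp: unitary_mat_def real_diagonal_mat_def)
    show "(\<lambda>k. B k $$ (i,j)) \<longlonglongrightarrow> A $$ (i,j)" if "i < d" "j < d" for i j
      using B(2) that by (intro LIMSEQ_if_norm_diff_less_inverse_Suc) blast
  qed
  then obtain k where "?good (B k)"
    using close_spectral_decomposition_in_convergent_seq[where B = B, OF P S(1)[OF B(1)] _ S(2)[OF B(1)]]
      \<open>\<epsilon> > 0\<close> by blast
  with B(3) show False by blast
qed

theorem lemma3p6:
  fixes d r l :: nat and ls :: "nat \<Rightarrow> nat" and A P D :: "complex mat"
  assumes "d \<ge> 2" and "r \<ge> 1"
    and "\<forall>j\<in>{1..r}. ls j \<in> {1..d}"
    and "(\<Sum>j=1..r. ls j) \<le> d"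
    and "l = d - (\<Sum>j=1..r. ls j - 1)"
    and "A \<in> Hset d r ls"
    and "unitary_mat d P" and "real_diagonal_mat d D"
    and "A = P * D * mat_adjoint P"
    and "card {e. eigenvalue A e} = l"
  shows "\<forall>\<epsilon>>0. \<exists>\<delta>>0. \<forall>B\<in>Hset d r ls.
           (\<forall>i<d. \<forall>j<d. cmod (A $$ (i,j) - B $$ (i,j)) < \<delta>) \<longrightarrow>
           card {e. eigenvalue B e} = l \<and>
           (\<exists>Q F. unitary_mat d Q \<and> real_diagonal_mat d F \<and> B = Q * F * mat_adjoint Q \<and>
              (\<forall>i<d. cmod (D $$ (i,i) - F $$ (i,i)) < \<epsilon>) \<and>
              (\<forall>i<d. \<forall>j<d. cmod (Q $$ (i,j) - P $$ (i,j)) < \<epsilon>))"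
proof (intro allI impI)
  fix \<epsilon> :: real assume "\<epsilon> > 0"
  have "(\<Sum>j=1..r. ls j - 1) + r = (\<Sum>j=1..r. ls j - 1 + 1)" by (simp only: sum.distrib) simp
  also have "\<dots> = (\<Sum>j=1..r. ls j)" using assms(3) by (intro sum.cong) force+
  finally have "card {e. eigenvalue B e} \<le> card {e. eigenvalue A e}" if "B \<in> Hset d r ls" for B
    using card_eigenvalues_Hset[OF that] assms(4,5,10) by linarith
  with close_spectral_decomposition_nearby[OF assms(7,8,9) _ _ \<open>\<epsilon> > 0\<close>, of "Hset d r ls"]
  show "\<exists>\<delta>>0. \<forall>B\<in>Hset d r ls. (\<forall>i<d. \<forall>j<d. cmod (A $$ (i,j) - B $$ (i,j)) < \<delta>) \<longrightarrow>
      card {e. eigenvalue B e} = l \<and>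
      (\<exists>Q F. unitary_mat d Q \<and> real_diagonal_mat d F \<and> B = Q * F * mat_adjoint Q \<and>
        (\<forall>i<d. cmod (D $$ (i,i) - F $$ (i,i)) < \<epsilon>) \<and>
        (\<forall>i<d. \<forall>j<d. cmod (Q $$ (i,j) - P $$ (i,j)) < \<epsilon>))"
    unfolding close_spectral_decomposition_def Hset_def assms(10) by blast
qed

end
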